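(* Let $\mathrm{st}(\hat p)$ be a full $m$-dimensional star embedded in $\mathbb{R}^m$ such that every $m$-simplex $\sigma$ of it satisfies $s_0\le L(\sigma)\le L_0$ and $t(\sigma)\ge t_0$. Let $F\colon|\mathrm{st}(\hat p)|\to\mathbb{R}^m$ fix every vertex, and suppose its restriction to every $m$-simplex is a $\xi$-distortion map with $$\xi<\frac16\,\frac{m}{m+1}\,\frac{s_0}{L_0}\,t_0^2.$$ For $\delta>0$ let $V_\delta$ be the set of points of $|\mathrm{st}(\hat p)|$ whose barycentric coordinate with respect to $\hat p$, in an $m$-simplex containing them, is strictly greater than $\frac1{m+1}-\delta$. Then for every $\delta$ with $0<\delta\le\frac1{m+1}-\frac{6L_0\xi}{m s_0t_0^2}$, one has $F(V_\delta)\cap F(|\partial\,\mathrm{st}(\hat p)|)=\emptyset$.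
   Context: $\mathrm{st}(\hat p)$ is the complex of all simplices with vertex $\hat p$ and their faces; it is a full star if its carrier is an $m$-manifold with boundary and $\hat p$ is not in the boundary complex $\partial\,\mathrm{st}(\hat p)$ (the $(m-1)$-simplices that are faces of exactly one $m$-simplex, with their faces). For an $m$-simplex, $L$ is the longest edge length, $a$ the smallest altitude, $t=a/(mL)$. $F$ is a $\xi$-distortion map on a set if $\bigl|\|F(x)-F(y)\|-\|x-y\|\bigr|\le\xi\|x-y\|$ there. *)

theory Defs
  imports "HOL-Analysis.Analysis"
begin

text \<open>Geometric simplicial complexes in real^'m, represented by the vertex sets
of their simplices. A simplex is a finite, nonempty, affinely independent set of
points; its geometric realisation is its convex hull. The dimension m of the
ambient space is CARD('m).\<close>

definition simplicial_complex :: "(real^'m) set set \<Rightarrow> bool" where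
  "simplicial_complex K \<longleftrightarrow>
     finite K \<and>
     (\<forall>\<sigma>\<in>K. finite \<sigma> \<and> \<sigma> \<noteq> {} \<and> \<not> affine_dependent \<sigma>) \<and>
     (\<forall>\<sigma>\<in>K. \<forall>\<tau>. \<tau> \<subseteq> \<sigma> \<and> \<tau> \<noteq> {} \<longrightarrow> \<tau> \<in> K) \<and>
     (\<forall>\<sigma>\<in>K. \<forall>\<tau>\<in>K. convex hull \<sigma> \<inter> convex hull \<tau> = convex hull (\<sigma> \<inter> \<tau>))"

definition carrier :: "(real^'m) set set \<Rightarrow> (real^'m) set" where
  "carrier K = (\<Union>\<sigma>\<in>K. convex hull \<sigma>)"

definition top_simplices :: "(real^'m) set set \<Rightarrow> (real^'m) set set" where
  "top_simplices K = {\<sigma>\<in>K. card \<sigma> = CARD('m) + 1}"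

definition is_star :: "real^'m \<Rightarrow> (real^'m) set set \<Rightarrow> bool" where
  "is_star p K \<longleftrightarrow> simplicial_complex K \<and> {p} \<in> K \<and>
     (\<forall>\<tau>\<in>K. \<exists>\<sigma>\<in>K. p \<in> \<sigma> \<and> \<tau> \<subseteq> \<sigma>)"

definition boundary_complex :: "(real^'m) set set \<Rightarrow> (real^'m) set set" where
  "boundary_complex K = {\<tau>. \<tau> \<noteq> {} \<and> (\<exists>\<rho>\<in>K. card \<rho> = CARD('m) \<and>
       card {\<sigma>\<in>top_simplices K. \<rho> \<subseteq> \<sigma>} = 1 \<and> \<tau> \<subseteq> \<rho>)}"

definition manifold_with_boundary :: "(real^'m) set \<Rightarrow> bool" where
  "manifold_with_boundary M \<longleftrightarrow>
     (\<forall>x\<in>M. \<exists>U V i. openin (top_of_set M) U \<and> x \<in> U \<and>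
        openin (top_of_set {y::real^'m. 0 \<le> y $ i}) V \<and> U homeomorphic V)"

definition full_star :: "real^'m \<Rightarrow> (real^'m) set set \<Rightarrow> bool" where
  "full_star p K \<longleftrightarrow> is_star p K \<and> manifold_with_boundary (carrier K) \<and>
     {p} \<notin> boundary_complex K"

definition longest_edge :: "(real^'m) set \<Rightarrow> real" where
  "longest_edge \<sigma> = Max {dist x y | x y. x \<in> \<sigma> \<and> y \<in> \<sigma>}"

definition smallest_altitude :: "(real^'m) set \<Rightarrow> real" where
  "smallest_altitude \<sigma> = Min ((\<lambda>v. infdist v (affine hull (\<sigma> - {v}))) ` \<sigma>)"

definition thickness :: "(real^'m) set \<Rightarrow> real" where
  "thickness \<sigma> = smallest_altitude \<sigma> / (real CARD('m) * longest_edge \<sigma>)"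

definition bary_coord :: "(real^'m) set \<Rightarrow> real^'m \<Rightarrow> real^'m \<Rightarrow> real" where
  "bary_coord \<sigma> p x = (THE l. \<exists>u. sum u \<sigma> = 1 \<and> (\<Sum>v\<in>\<sigma>. u v *\<^sub>R v) = x \<and> l = u p)"

definition distortion_map :: "real \<Rightarrow> ('a::real_normed_vector \<Rightarrow> 'b::real_normed_vector) \<Rightarrow> 'a set \<Rightarrow> bool" where
  "distortion_map \<xi> F S \<longleftrightarrow>
     (\<forall>x\<in>S. \<forall>y\<in>S. \<bar>norm (F x - F y) - norm (x - y)\<bar> \<le> \<xi> * norm (x - y))"

definition V_delta :: "real^'m \<Rightarrow> (real^'m) set set \<Rightarrow> real \<Rightarrow> (real^'m) set" where
  "V_delta p K \<delta> = {x \<in> carrier K. \<exists>\<sigma>\<in>top_simplices K. p \<in> \<sigma> \<and> x \<in> convex hull \<sigma> \<and>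
        bary_coord \<sigma> p x > 1 / (real CARD('m) + 1) - \<delta>}"

end

theory Submission
  imports Defs
begin

text \<open>Let \<open>\<lambda>\<close> be the barycentric coordinate of \<open>p\<close>, well defined on the star. A point \<open>y\<close> of the
  boundary lies on a facet opposite \<open>p\<close>, so \<open>\<lambda> y = 0\<close>. In a simplex all of whose altitudes are at
  least \<open>A = m s0 t0\<close> the barycentric coordinates are \<open>1/A\<close>-Lipschitz; since every facet through \<open>p\<close>
  is shared by two simplices lying on opposite sides of it, \<open>\<lambda>\<close> stays \<open>1/A\<close>-Lipschitz along
  segments until they leave the open star of \<open>p\<close>, whence \<open>|x - y| \<ge> A \<lambda> x\<close>. On the other hand a
  \<open>\<xi>\<close>-distortion map fixing the vertices of a simplex nearly preserves the squared distances to the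
  vertices, which determine a point, so it moves points by at most \<open>3 \<xi> L0 / t0\<close>. If
  \<open>F x = F y\<close>, then \<open>|x - y| \<le> 6 \<xi> L0 / t0 < A \<lambda> x\<close> for \<open>x \<in> V\<^sub>\<delta>\<close>, a contradiction.\<close>

definition spanning_simplex :: "(real^'m) set \<Rightarrow> bool" where
  "spanning_simplex \<sigma> \<longleftrightarrow> finite \<sigma> \<and> \<not> affine_dependent \<sigma> \<and> affine hull \<sigma> = UNIV"

lemma spanning_simplexI:
  fixes \<sigma> :: "(real^'m) set"
  assumes "finite \<sigma>" "\<not> affine_dependent \<sigma>" "card \<sigma> = CARD('m) + 1"
  shows "spanning_simplex \<sigma>"
proof -
  have "aff_dim \<sigma> = int DIM(real^'m)"
    using aff_dim_affine_independent[OF assms(2)] assms(3) by simp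
  then show ?thesis
    using aff_dim_eq_full[of \<sigma>] assms(1,2) by (simp add: spanning_simplex_def)
qed

lemma bary_coord_eqI:
  assumes "spanning_simplex \<sigma>" "sum u \<sigma> = 1" "(\<Sum>w\<in>\<sigma>. u w *\<^sub>R w) = x" "v \<in> \<sigma>"
  shows "bary_coord \<sigma> v x = u v"
  unfolding bary_coord_def
proof (rule the_equality)
  show "\<exists>u'. sum u' \<sigma> = 1 \<and> (\<Sum>v\<in>\<sigma>. u' v *\<^sub>R v) = x \<and> u v = u' v"
    using assms by blast
next
  fix l assume "\<exists>u'. sum u' \<sigma> = 1 \<and> (\<Sum>v\<in>\<sigma>. u' v *\<^sub>R v) = x \<and> l = u' v"
  then obtain u' where u': "sum u' \<sigma> = 1" "(\<Sum>v\<in>\<sigma>. u' v *\<^sub>R v) = x" "l = u' v" by blast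
  have fin: "finite \<sigma>" and indep: "\<not> affine_dependent \<sigma>"
    using assms(1) by (auto simp: spanning_simplex_def)
  have "sum (\<lambda>w. u w - u' w) \<sigma> = 0" "(\<Sum>w\<in>\<sigma>. (u w - u' w) *\<^sub>R w) = 0"
    using assms(2,3) u'(1,2) by (simp_all add: sum_subtractf scaleR_diff_left)
  then have "\<forall>w\<in>\<sigma>. u w - u' w = 0"
    using indep affine_dependent_explicit_finite[OF fin] by blast
  then show "l = u v" using u'(3) assms(4) by auto
qed

lemma bary_coord_sum_eq_1_and_combination:
  assumes "spanning_simplex \<sigma>"
  shows "(\<Sum>w\<in>\<sigma>. bary_coord \<sigma> w x) = 1 \<and> (\<Sum>w\<in>\<sigma>. bary_coord \<sigma> w x *\<^sub>R w) = x"
proof -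
  have "finite \<sigma>" "x \<in> affine hull \<sigma>" using assms by (auto simp: spanning_simplex_def)
  then obtain u where u: "sum u \<sigma> = 1" "(\<Sum>w\<in>\<sigma>. u w *\<^sub>R w) = x"
    by (auto simp: affine_hull_finite)
  then have "\<And>w. w \<in> \<sigma> \<Longrightarrow> bary_coord \<sigma> w x = u w" using bary_coord_eqI[OF assms] by blast
  then show ?thesis using u by (simp cong: sum.cong)
qed

lemma bary_coord_sum_eq_1: "spanning_simplex \<sigma> \<Longrightarrow> (\<Sum>w\<in>\<sigma>. bary_coord \<sigma> w x) = 1"
  using bary_coord_sum_eq_1_and_combination by blast

lemma bary_coord_combination: "spanning_simplex \<sigma> \<Longrightarrow> (\<Sum>w\<in>\<sigma>. bary_coord \<sigma> w x *\<^sub>R w) = x"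
  using bary_coord_sum_eq_1_and_combination by blast

lemma bary_coord_affine_sum:
  assumes "spanning_simplex \<sigma>" "v \<in> \<sigma>" "finite I" "sum c I = 1"
  shows "bary_coord \<sigma> v (\<Sum>i\<in>I. c i *\<^sub>R z i) = (\<Sum>i\<in>I. c i * bary_coord \<sigma> v (z i))"
proof (rule bary_coord_eqI[OF assms(1) _ _ assms(2)])
  show "(\<Sum>w\<in>\<sigma>. \<Sum>i\<in>I. c i * bary_coord \<sigma> w (z i)) = 1"
    using bary_coord_sum_eq_1[OF assms(1)] assms(4)
    by (subst sum.swap) (simp add: sum_distrib_left[symmetric])
  have "(\<Sum>w\<in>\<sigma>. (\<Sum>i\<in>I. c i * bary_coord \<sigma> w (z i)) *\<^sub>R w)
      = (\<Sum>i\<in>I. c i *\<^sub>R (\<Sum>w\<in>\<sigma>. bary_coord \<sigma> w (z i) *\<^sub>R w))"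
    by (simp add: scaleR_sum_left scaleR_sum_right sum.swap[of _ \<sigma>])
  then show "(\<Sum>w\<in>\<sigma>. (\<Sum>i\<in>I. c i * bary_coord \<sigma> w (z i)) *\<^sub>R w) = (\<Sum>i\<in>I. c i *\<^sub>R z i)"
    using bary_coord_combination[OF assms(1)] by simp
qed

lemma bary_coord_add_scaleR_diff:
  assumes "spanning_simplex \<sigma>" "v \<in> \<sigma>"
  shows "bary_coord \<sigma> v (z + c *\<^sub>R (x - y))
    = bary_coord \<sigma> v z + c * (bary_coord \<sigma> v x - bary_coord \<sigma> v y)"
proof (rule bary_coord_eqI[OF assms(1) _ _ assms(2)])
  show "(\<Sum>w\<in>\<sigma>. bary_coord \<sigma> w z + c * (bary_coord \<sigma> w x - bary_coord \<sigma> w y)) = 1"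
    using bary_coord_sum_eq_1[OF assms(1)]
    by (simp add: sum.distrib sum_subtractf sum_distrib_left[symmetric])
  have "(\<Sum>w\<in>\<sigma>. (bary_coord \<sigma> w z + c * (bary_coord \<sigma> w x - bary_coord \<sigma> w y)) *\<^sub>R w)
      = (\<Sum>w\<in>\<sigma>. bary_coord \<sigma> w z *\<^sub>R w)
        + c *\<^sub>R ((\<Sum>w\<in>\<sigma>. bary_coord \<sigma> w x *\<^sub>R w) - (\<Sum>w\<in>\<sigma>. bary_coord \<sigma> w y *\<^sub>R w))"
    by (simp add: scaleR_add_left scaleR_diff_left scaleR_diff_right right_diff_distrib sum.distrib
        sum_subtractf scaleR_sum_right)
  then show "(\<Sum>w\<in>\<sigma>. (bary_coord \<sigma> w z + c * (bary_coord \<sigma> w x - bary_coord \<sigma> w y)) *\<^sub>R w)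
      = z + c *\<^sub>R (x - y)"
    using bary_coord_combination[OF assms(1)] by simp
qed

lemma bary_coord_affine_comb:
  assumes "spanning_simplex \<sigma>" "v \<in> \<sigma>" "a + b = 1"
  shows "bary_coord \<sigma> v (a *\<^sub>R x + b *\<^sub>R y) = a * bary_coord \<sigma> v x + b * bary_coord \<sigma> v y"
proof -
  have b: "b = 1 - a" using assms(3) by simp
  have eq: "a *\<^sub>R x + b *\<^sub>R y = y + a *\<^sub>R (x - y)" by (simp add: b algebra_simps)
  show ?thesis unfolding eq bary_coord_add_scaleR_diff[OF assms(1,2)] by (simp add: b algebra_simps)
qed

lemma mem_convex_hull_iff_bary_coord_nonneg:
  assumes "spanning_simplex \<sigma>"
  shows "x \<in> convex hull \<sigma> \<longleftrightarrow> (\<forall>v\<in>\<sigma>. 0 \<le> bary_coord \<sigma> v x)"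
proof -
  have fin: "finite \<sigma>" using assms by (simp add: spanning_simplex_def)
  show ?thesis
  proof
    assume "x \<in> convex hull \<sigma>"
    then obtain u where "\<forall>w\<in>\<sigma>. 0 \<le> u w" "sum u \<sigma> = 1" "(\<Sum>w\<in>\<sigma>. u w *\<^sub>R w) = x"
      by (auto simp: convex_hull_finite[OF fin])
    then show "\<forall>v\<in>\<sigma>. 0 \<le> bary_coord \<sigma> v x" using bary_coord_eqI[OF assms] by simp
  next
    assume "\<forall>v\<in>\<sigma>. 0 \<le> bary_coord \<sigma> v x"
    then show "x \<in> convex hull \<sigma>"
      using bary_coord_sum_eq_1[OF assms] bary_coord_combination[OF assms]
      by (auto simp: convex_hull_finite[OF fin])
  qed
qed

lemma bary_coord_face_combination:
  assumes "spanning_simplex \<sigma>" "\<phi> \<subseteq> \<sigma>" "sum u \<phi> = 1" "(\<Sum>w\<in>\<phi>. u w *\<^sub>R w) = x" "v \<in> \<sigma>"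
  shows "bary_coord \<sigma> v x = (if v \<in> \<phi> then u v else 0)"
proof (rule bary_coord_eqI[OF assms(1) _ _ assms(5)])
  have fin: "finite \<sigma>" using assms(1) by (simp add: spanning_simplex_def)
  have "(\<Sum>w\<in>\<sigma>. if w \<in> \<phi> then u w else 0) = sum u \<phi>"
    using fin assms(2) by (simp add: sum.If_cases Int_absorb1)
  then show "(\<Sum>w\<in>\<sigma>. if w \<in> \<phi> then u w else 0) = 1" using assms(3) by simp
  have "(\<Sum>w\<in>\<sigma>. (if w \<in> \<phi> then u w else 0) *\<^sub>R w) = (\<Sum>w\<in>\<phi>. u w *\<^sub>R w)"
    using fin assms(2) by (simp add: if_distrib[of "\<lambda>c. c *\<^sub>R _"] sum.If_cases Int_absorb1 cong: if_cong)
  then show "(\<Sum>w\<in>\<sigma>. (if w \<in> \<phi> then u w else 0) *\<^sub>R w) = x" using assms(4) by simp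
qed

lemma bary_coord_eq_0_off_face:
  assumes "spanning_simplex \<sigma>" "\<phi> \<subseteq> \<sigma>" "x \<in> convex hull \<phi>" "v \<in> \<sigma>" "v \<notin> \<phi>"
  shows "bary_coord \<sigma> v x = 0"
proof -
  have "finite \<phi>" using assms(1,2) finite_subset by (auto simp: spanning_simplex_def)
  then obtain u where "sum u \<phi> = 1" "(\<Sum>w\<in>\<phi>. u w *\<^sub>R w) = x"
    using assms(3) by (auto simp: convex_hull_finite)
  from bary_coord_face_combination[OF assms(1,2) this assms(4)] assms(5) show ?thesis by simp
qed

lemma bary_coord_common_face:
  assumes "spanning_simplex \<sigma>" "spanning_simplex \<tau>" "x \<in> convex hull (\<sigma> \<inter> \<tau>)" "v \<in> \<sigma> \<inter> \<tau>"
  shows "bary_coord \<sigma> v x = bary_coord \<tau> v x"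
proof -
  have "finite (\<sigma> \<inter> \<tau>)" using assms(1) by (simp add: spanning_simplex_def)
  then obtain u where u: "sum u (\<sigma> \<inter> \<tau>) = 1" "(\<Sum>w\<in>\<sigma> \<inter> \<tau>. u w *\<^sub>R w) = x"
    using assms(3) by (auto simp: convex_hull_finite)
  show ?thesis
    using bary_coord_face_combination[OF assms(1) _ u, of v] bary_coord_face_combination[OF assms(2) _ u, of v]
      assms(4) by simp
qed

lemma bary_coord_barycentre:
  assumes "spanning_simplex \<sigma>" "\<phi> \<subseteq> \<sigma>" "\<phi> \<noteq> {}" "u \<in> \<sigma>"
  shows "bary_coord \<sigma> u (\<Sum>w\<in>\<phi>. (1 / card \<phi>) *\<^sub>R w) = (if u \<in> \<phi> then 1 / card \<phi> else 0)"
proof -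
  have "finite \<phi>" using assms(1,2) finite_subset by (auto simp: spanning_simplex_def)
  then have "(\<Sum>w\<in>\<phi>. 1 / real (card \<phi>)) = 1" using assms(3) by simp
  from bary_coord_face_combination[OF assms(1,2) this refl assms(4)] show ?thesis .
qed

lemma bary_coord_vertex:
  assumes "spanning_simplex \<sigma>" "v \<in> \<sigma>" "u \<in> \<sigma>"
  shows "bary_coord \<sigma> u v = (if u = v then 1 else 0)"
  using bary_coord_face_combination[OF assms(1), of "{v}" "\<lambda>_. 1" v u] assms by auto

lemma convex_hull_positive_support:
  assumes "spanning_simplex \<sigma>" "w \<in> convex hull \<sigma>"
  shows "w \<in> convex hull {v\<in>\<sigma>. 0 < bary_coord \<sigma> v w}"
proof -
  define \<phi> where "\<phi> = {v\<in>\<sigma>. 0 < bary_coord \<sigma> v w}"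
  have fin: "finite \<sigma>" "finite \<phi>" "\<phi> \<subseteq> \<sigma>" using assms(1) by (auto simp: spanning_simplex_def \<phi>_def)
  have "\<forall>v\<in>\<sigma> - \<phi>. bary_coord \<sigma> v w = 0"
    using assms by (force simp: \<phi>_def mem_convex_hull_iff_bary_coord_nonneg[OF assms(1)])
  then have "(\<Sum>v\<in>\<phi>. bary_coord \<sigma> v w *\<^sub>R v) = (\<Sum>v\<in>\<sigma>. bary_coord \<sigma> v w *\<^sub>R v)"
    "(\<Sum>v\<in>\<phi>. bary_coord \<sigma> v w) = (\<Sum>v\<in>\<sigma>. bary_coord \<sigma> v w)"
    by (auto intro: sum.mono_neutral_left[OF fin(1,3)])
  then have "(\<Sum>v\<in>\<phi>. bary_coord \<sigma> v w *\<^sub>R v) = w" "(\<Sum>v\<in>\<phi>. bary_coord \<sigma> v w) = 1"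
    using bary_coord_sum_eq_1[OF assms(1)] bary_coord_combination[OF assms(1)] by simp_all
  then show ?thesis
    unfolding \<phi>_def[symmetric] convex_hull_finite[OF fin(2)]
    by (intro CollectI exI[of _ "\<lambda>v. bary_coord \<sigma> v w"]) (auto simp: \<phi>_def)
qed

text \<open>The point \<open>q = v + (x - y) / (\<lambda>\<^sub>v y - \<lambda>\<^sub>v x)\<close> has \<open>\<lambda>\<^sub>v q = 0\<close>, so it lies on the affine hull
  of the facet opposite \<open>v\<close>.\<close>

lemma infdist_mult_bary_coord_diff_le:
  assumes "spanning_simplex \<sigma>" "v \<in> \<sigma>"
  shows "infdist v (affine hull (\<sigma> - {v})) * \<bar>bary_coord \<sigma> v x - bary_coord \<sigma> v y\<bar> \<le> dist x y"
proof (cases "bary_coord \<sigma> v x = bary_coord \<sigma> v y")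
  case False
  define \<beta> where "\<beta> = bary_coord \<sigma> v y - bary_coord \<sigma> v x"
  have \<beta>: "\<beta> \<noteq> 0" using False by (simp add: \<beta>_def)
  define q where "q = v + (1/\<beta>) *\<^sub>R (x - y)"
  have fin: "finite \<sigma>" using assms(1) by (simp add: spanning_simplex_def)
  have "bary_coord \<sigma> v q = bary_coord \<sigma> v v + (1/\<beta>) * (bary_coord \<sigma> v x - bary_coord \<sigma> v y)"
    unfolding q_def by (rule bary_coord_add_scaleR_diff[OF assms])
  then have "bary_coord \<sigma> v q = 0"
    using bary_coord_vertex[OF assms(1,2,2)] \<beta> by (simp add: \<beta>_def field_simps)
  have "q \<in> affine hull (\<sigma> - {v})"
  proof -
    have "(\<Sum>w\<in>\<sigma>-{v}. bary_coord \<sigma> w q) = 1" "(\<Sum>w\<in>\<sigma>-{v}. bary_coord \<sigma> w q *\<^sub>R w) = q"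
      using bary_coord_sum_eq_1[OF assms(1), of q] bary_coord_combination[OF assms(1), of q]
        \<open>bary_coord \<sigma> v q = 0\<close> by (simp_all add: sum.remove[OF fin assms(2)])
    then show ?thesis using fin by (auto simp: affine_hull_finite)
  qed
  then have "infdist v (affine hull (\<sigma> - {v})) \<le> norm (x - y) / \<bar>\<beta>\<bar>"
    using infdist_le[of q _ v] by (simp add: q_def dist_norm)
  then show ?thesis
    using \<beta> by (simp add: \<beta>_def field_simps abs_minus_commute dist_norm)
qed simp

lemma dist_le_longest_edge:
  assumes "finite \<sigma>" "v \<in> \<sigma>" "x \<in> convex hull \<sigma>"
  shows "dist x v \<le> longest_edge \<sigma>"
proof -
  have "finite {dist x y | x y. x \<in> \<sigma> \<and> y \<in> \<sigma>}"
    using finite_image_set2[of "\<lambda>x. x \<in> \<sigma>" "\<lambda>y. y \<in> \<sigma>" dist] assms(1) by simp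
  then have "\<sigma> \<subseteq> cball v (longest_edge \<sigma>)"
    unfolding longest_edge_def using assms(2) by (auto intro!: Max_ge) blast
  then have "convex hull \<sigma> \<subseteq> cball v (longest_edge \<sigma>)"
    by (rule hull_minimal) (rule convex_cball)
  then show ?thesis using assms(3) by (auto simp: dist_commute)
qed

lemma smallest_altitude_le_infdist:
  "finite \<sigma> \<Longrightarrow> v \<in> \<sigma> \<Longrightarrow> smallest_altitude \<sigma> \<le> infdist v (affine hull (\<sigma> - {v}))"
  unfolding smallest_altitude_def by (intro Min_le) auto

lemma smallest_altitude_nonneg: "finite \<sigma> \<Longrightarrow> \<sigma> \<noteq> {} \<Longrightarrow> 0 \<le> smallest_altitude \<sigma>"
  unfolding smallest_altitude_def by (auto intro!: Min.boundedI infdist_nonneg)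

lemma smallest_altitude_le_longest_edge:
  assumes "finite \<sigma>" "u \<in> \<sigma>" "v \<in> \<sigma>" "u \<noteq> v"
  shows "smallest_altitude \<sigma> \<le> longest_edge \<sigma>"
proof -
  have "smallest_altitude \<sigma> \<le> infdist v (affine hull (\<sigma> - {v}))"
    using assms by (simp add: smallest_altitude_le_infdist)
  also have "\<dots> \<le> dist v u" using assms by (intro infdist_le hull_inc) auto
  also have "\<dots> \<le> longest_edge \<sigma>" using assms by (intro dist_le_longest_edge hull_inc)
  finally show ?thesis .
qed

lemma smallest_altitude_mult_bary_coord_diff_le:
  assumes "spanning_simplex \<sigma>" "v \<in> \<sigma>"
  shows "smallest_altitude \<sigma> * \<bar>bary_coord \<sigma> v x - bary_coord \<sigma> v y\<bar> \<le> dist x y"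
proof -
  have "smallest_altitude \<sigma> \<le> infdist v (affine hull (\<sigma> - {v}))"
    using assms by (simp add: smallest_altitude_le_infdist spanning_simplex_def)
  then have "smallest_altitude \<sigma> * \<bar>bary_coord \<sigma> v x - bary_coord \<sigma> v y\<bar>
      \<le> infdist v (affine hull (\<sigma> - {v})) * \<bar>bary_coord \<sigma> v x - bary_coord \<sigma> v y\<bar>"
    by (rule mult_right_mono) simp
  also have "\<dots> \<le> dist x y" by (rule infdist_mult_bary_coord_diff_le[OF assms])
  finally show ?thesis .
qed

lemma thickness_le_smallest_altitude:
  fixes \<sigma> :: "(real^'m) set"
  assumes "0 < longest_edge \<sigma>" "t \<le> thickness \<sigma>"
  shows "real CARD('m) * longest_edge \<sigma> * t \<le> smallest_altitude \<sigma>"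
  using assms by (simp add: thickness_def le_divide_eq algebra_simps)

lemma abs_power2_diff_le:
  fixes r s \<xi> L :: real
  assumes "\<bar>r - s\<bar> \<le> \<xi> * s" "0 \<le> s" "s \<le> L" "0 \<le> \<xi>" "0 \<le> r"
  shows "\<bar>r\<^sup>2 - s\<^sup>2\<bar> \<le> (2 * \<xi> + \<xi>\<^sup>2) * L\<^sup>2"
proof -
  have "r\<^sup>2 - s\<^sup>2 = (r - s) * (r + s)" by (simp add: power2_eq_square algebra_simps)
  then have "\<bar>r\<^sup>2 - s\<^sup>2\<bar> = \<bar>r - s\<bar> * (r + s)" using assms(2,5) by (simp add: abs_mult)
  also have "\<dots> \<le> (\<xi> * s) * ((2 + \<xi>) * s)"
    using assms by (intro mult_mono) (auto simp: algebra_simps abs_le_iff)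
  also have "\<dots> = (2 * \<xi> + \<xi>\<^sup>2) * s\<^sup>2" by (simp add: power2_eq_square algebra_simps)
  also have "\<dots> \<le> (2 * \<xi> + \<xi>\<^sup>2) * L\<^sup>2"
    using assms by (intro mult_left_mono power_mono) auto
  finally show ?thesis .
qed

lemma abs_inner_diff_le_of_sqdist:
  fixes q x u v :: "'a::real_inner"
  assumes "\<bar>(norm (q - u))\<^sup>2 - (norm (x - u))\<^sup>2\<bar> \<le> B" "\<bar>(norm (q - v))\<^sup>2 - (norm (x - v))\<^sup>2\<bar> \<le> B"
  shows "\<bar>(q - x) \<bullet> (v - u)\<bar> \<le> B"
proof -
  have "2 * ((q - x) \<bullet> (v - u))
      = ((norm (q - u))\<^sup>2 - (norm (x - u))\<^sup>2) - ((norm (q - v))\<^sup>2 - (norm (x - v))\<^sup>2)"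
    by (simp add: power2_norm_eq_inner inner_diff_left inner_diff_right inner_commute algebra_simps)
  then show ?thesis using assms by linarith
qed

text \<open>Writing \<open>q - x = (\<Sum>v. \<beta>\<^sub>v (v - v\<^sub>0))\<close> with \<open>\<beta>\<^sub>v\<close> the differences of barycentric coordinates,
  \<open>|q - x|\<^sup>2 = (\<Sum>v. \<beta>\<^sub>v (q - x) \<bullet> (v - v\<^sub>0))\<close>, and \<open>a |\<beta>\<^sub>v| \<le> |q - x|\<close>.\<close>

lemma smallest_altitude_mult_norm_le:
  fixes \<sigma> :: "(real^'m) set"
  assumes \<sigma>: "spanning_simplex \<sigma>" "card \<sigma> = CARD('m) + 1" and v0: "v0 \<in> \<sigma>"
    and bound: "\<And>v. v \<in> \<sigma> \<Longrightarrow> \<bar>(q - x) \<bullet> (v - v0)\<bar> \<le> B"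
  shows "smallest_altitude \<sigma> * norm (q - x) \<le> real CARD('m) * B"
proof -
  define a where "a = smallest_altitude \<sigma>"
  define w where "w = q - x"
  define \<beta> where "\<beta> v = bary_coord \<sigma> v q - bary_coord \<sigma> v x" for v
  have fin: "finite \<sigma>" using \<sigma>(1) by (simp add: spanning_simplex_def)
  have "sum \<beta> \<sigma> = 0" "(\<Sum>v\<in>\<sigma>. \<beta> v *\<^sub>R v) = w"
    using bary_coord_sum_eq_1[OF \<sigma>(1)] bary_coord_combination[OF \<sigma>(1)]
    by (simp_all add: \<beta>_def w_def sum_subtractf scaleR_diff_left)
  then have "(\<Sum>v\<in>\<sigma>. \<beta> v *\<^sub>R (v - v0)) = w"
    by (simp add: scaleR_diff_right sum_subtractf flip: scaleR_sum_left)
  then have "(\<Sum>v\<in>\<sigma> - {v0}. \<beta> v *\<^sub>R (v - v0)) = w"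
    by (simp add: sum.remove[OF fin v0])
  then have "a * (norm w)\<^sup>2 = a * (w \<bullet> (\<Sum>v\<in>\<sigma> - {v0}. \<beta> v *\<^sub>R (v - v0)))"
    by (simp add: power2_norm_eq_inner)
  also have "\<dots> = (\<Sum>v\<in>\<sigma> - {v0}. a * (\<beta> v * (w \<bullet> (v - v0))))"
    by (simp add: inner_sum_right sum_distrib_left)
  also have "\<dots> \<le> (\<Sum>v\<in>\<sigma> - {v0}. norm w * B)"
  proof (rule sum_mono)
    fix v assume v: "v \<in> \<sigma> - {v0}"
    have "a * \<bar>\<beta> v\<bar> \<le> norm w"
      using smallest_altitude_mult_bary_coord_diff_le[OF \<sigma>(1)] v by (simp add: a_def \<beta>_def w_def dist_norm)
    moreover have "0 \<le> a" using smallest_altitude_nonneg fin v0 by (auto simp: a_def)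
    ultimately have "\<bar>a * (\<beta> v * (w \<bullet> (v - v0)))\<bar> \<le> norm w * B"
      using bound[of v] v by (auto simp: abs_mult w_def mult.assoc[symmetric] intro: mult_mono)
    then show "a * (\<beta> v * (w \<bullet> (v - v0))) \<le> norm w * B" by linarith
  qed
  also have "\<dots> = real CARD('m) * B * norm w" using \<sigma>(2) fin v0 by simp
  finally have "a * norm w * norm w \<le> real CARD('m) * B * norm w"
    by (simp add: power2_eq_square mult.assoc)
  moreover have "0 \<le> B" using bound[OF v0] by simp
  ultimately show ?thesis
    by (cases "norm w = 0") (auto simp: a_def w_def mult_le_cancel_right)
qed

text \<open>A \<open>\<xi>\<close>-distortion map fixing the vertices changes squared distances to the vertices by
  at most \<open>(2\<xi> + \<xi>\<^sup>2) L\<^sup>2\<close>, and a point is pinned down by these squared distances.\<close>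

lemma distortion_map_displacement_le:
  fixes \<sigma> :: "(real^'m) set" and F :: "real^'m \<Rightarrow> real^'m"
  assumes \<sigma>: "spanning_simplex \<sigma>" "card \<sigma> = CARD('m) + 1"
    and F: "distortion_map \<xi> F (convex hull \<sigma>)" "\<forall>v\<in>\<sigma>. F v = v"
    and x: "x \<in> convex hull \<sigma>" and "0 \<le> \<xi>"
  shows "smallest_altitude \<sigma> * norm (F x - x) \<le> real CARD('m) * ((2 * \<xi> + \<xi>\<^sup>2) * (longest_edge \<sigma>)\<^sup>2)"
proof -
  have fin: "finite \<sigma>" using \<sigma>(1) by (simp add: spanning_simplex_def)
  obtain v0 where v0: "v0 \<in> \<sigma>" using \<sigma>(2) by fastforce
  have sqdist: "\<bar>(norm (F x - v))\<^sup>2 - (norm (x - v))\<^sup>2\<bar> \<le> (2 * \<xi> + \<xi>\<^sup>2) * (longest_edge \<sigma>)\<^sup>2"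
    if v: "v \<in> \<sigma>" for v
  proof (rule abs_power2_diff_le)
    show "\<bar>norm (F x - v) - norm (x - v)\<bar> \<le> \<xi> * norm (x - v)"
      using F x hull_inc[OF v] v unfolding distortion_map_def by metis
    show "norm (x - v) \<le> longest_edge \<sigma>"
      using dist_le_longest_edge[OF fin v x] by (simp add: dist_norm)
  qed (use \<open>0 \<le> \<xi>\<close> in auto)
  show ?thesis
    using sqdist v0 by (intro smallest_altitude_mult_norm_le[OF \<sigma> v0] abs_inner_diff_le_of_sqdist)
qed

lemma distortion_map_displacement_le_thickness:
  fixes \<sigma> :: "(real^'m) set" and F :: "real^'m \<Rightarrow> real^'m"
  assumes \<sigma>: "spanning_simplex \<sigma>" "card \<sigma> = CARD('m) + 1"
    and F: "distortion_map \<xi> F (convex hull \<sigma>)" "\<forall>v\<in>\<sigma>. F v = v"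
    and x: "x \<in> convex hull \<sigma>" and \<xi>: "0 \<le> \<xi>" "\<xi> \<le> 1"
    and t: "0 < t" "t \<le> thickness \<sigma>" and L: "0 < longest_edge \<sigma>" "longest_edge \<sigma> \<le> L0"
  shows "norm (F x - x) \<le> 3 * \<xi> * L0 / t"
proof -
  define L where "L = longest_edge \<sigma>"
  have "real CARD('m) * L * t * norm (F x - x) \<le> smallest_altitude \<sigma> * norm (F x - x)"
    using thickness_le_smallest_altitude[OF L(1) t(2)] by (simp add: L_def mult_right_mono)
  also have "\<dots> \<le> real CARD('m) * ((2 * \<xi> + \<xi>\<^sup>2) * L\<^sup>2)"
    unfolding L_def by (rule distortion_map_displacement_le[OF \<sigma> F x \<xi>(1)])
  also have "\<dots> \<le> real CARD('m) * (3 * \<xi> * L\<^sup>2)"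
  proof -
    have "\<xi>\<^sup>2 \<le> \<xi>" using \<xi> by (simp add: power2_eq_square mult_left_le)
    then show ?thesis by (intro mult_left_mono mult_right_mono) auto
  qed
  finally have "real CARD('m) * (L * (t * norm (F x - x))) \<le> real CARD('m) * (L * (3 * \<xi> * L))"
    by (simp add: power2_eq_square algebra_simps)
  then have "t * norm (F x - x) \<le> 3 * \<xi> * L" using L(1) by (simp add: L_def)
  also have "\<dots> \<le> 3 * \<xi> * L0" using L(2) \<xi>(1) by (simp add: L_def mult_left_mono)
  finally show ?thesis using t(1) by (simp add: field_simps)
qed

lemma distortion_map_nonneg:
  assumes "distortion_map \<xi> F S" "u \<in> S" "v \<in> S" "u \<noteq> v"
  shows "0 \<le> \<xi>"
proof -
  have "0 \<le> \<xi> * norm (u - v)"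
    using assms(1-3) unfolding distortion_map_def by (meson abs_ge_zero order_trans)
  then show ?thesis using assms(4) by (simp add: zero_le_mult_iff)
qed

lemma distortion_constant_le_one:
  fixes \<sigma> :: "(real^'m) set"
  assumes \<sigma>: "finite \<sigma>" "card \<sigma> = CARD('m) + 1" "u \<in> \<sigma>" "v \<in> \<sigma>" "u \<noteq> v"
    and L: "0 < s0" "s0 \<le> longest_edge \<sigma>" "longest_edge \<sigma> \<le> L0" and t: "0 < t0" "t0 \<le> thickness \<sigma>"
    and \<xi>: "\<xi> < 1/6 * (real CARD('m) / (real CARD('m) + 1)) * (s0 / L0) * t0\<^sup>2"
  shows "\<xi> \<le> 1"
proof -
  have "real CARD('m) * longest_edge \<sigma> * t0 \<le> longest_edge \<sigma>"
    using thickness_le_smallest_altitude[OF _ t(2)] smallest_altitude_le_longest_edge[OF \<sigma>(1,3-5)] L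
    by linarith
  then have "real CARD('m) * t0 \<le> 1" using L by (simp add: mult.commute mult_le_cancel_right1)
  then have "t0\<^sup>2 \<le> 1" using t(1) by (simp add: power_le_one order_trans[of t0 "real CARD('m) * t0"])
  moreover have "real CARD('m) / (real CARD('m) + 1) \<le> 1" "s0 / L0 \<le> 1" "0 \<le> s0 / L0" using L by auto
  moreover define X where "X = (real CARD('m) / (real CARD('m) + 1)) * (s0 / L0) * t0\<^sup>2"
  ultimately have "X \<le> 1" unfolding X_def by (intro mult_le_one) auto
  moreover have "\<xi> < 1/6 * X" using \<xi> unfolding X_def by (simp only: mult.assoc)
  ultimately show ?thesis by linarith
qed

lemma exists_step_mult_less:
  fixes d r :: real
  assumes "0 \<le> d" "0 < r"
  obtains s where "0 < s" "s \<le> 1" "s * d < r"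
proof
  let ?s = "min 1 (r / (d + 1))"
  show "0 < ?s" "?s \<le> 1" using assms by (simp_all add: add_nonneg_pos)
  have "?s * d \<le> r / (d + 1) * d" using assms(1) by (intro mult_right_mono) auto
  also have "\<dots> < r" using assms by (simp add: field_simps add_nonneg_pos)
  finally show "?s * d < r" .
qed

lemma closed_segment_subset_closed:
  fixes x d :: "'a::real_normed_vector"
  assumes "closed S" "0 < t" "\<And>s. 0 \<le> s \<Longrightarrow> s < t \<Longrightarrow> x + s *\<^sub>R d \<in> S"
  shows "closed_segment x (x + t *\<^sub>R d) \<subseteq> S"
proof -
  define g where "g s = x + s *\<^sub>R d" for s
  have "closed (g -` S)"
    unfolding g_def by (intro continuous_closed_vimage assms(1)) (auto intro!: continuous_intros)
  moreover have "{0..<t} \<subseteq> g -` S" using assms(3) by (auto simp: g_def)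
  ultimately have "{0..t} \<subseteq> g -` S" using closure_minimal[of "{0..<t}" "g -` S"] assms(2) by simp
  moreover have "z \<in> g ` {0..t}" if z: "z \<in> closed_segment x (x + t *\<^sub>R d)" for z
  proof -
    obtain u where u: "0 \<le> u" "u \<le> 1" "z = (1 - u) *\<^sub>R x + u *\<^sub>R (x + t *\<^sub>R d)"
      using z unfolding in_segment(1) by blast
    then have "z = g (u * t)" by (simp add: g_def algebra_simps)
    moreover have "u * t \<in> {0..t}" using u(1,2) assms(2) by (simp add: mult_left_le_one_le)
    ultimately show ?thesis by blast
  qed
  ultimately show ?thesis by blast
qed

lemma first_failure_time:
  fixes P :: "real \<Rightarrow> bool"
  assumes "\<not> P 1"
    and right_open: "\<And>t. 0 \<le> t \<Longrightarrow> t < 1 \<Longrightarrow> P t \<Longrightarrow> \<exists>\<eta>>0. \<forall>s. t \<le> s \<and> s < t + \<eta> \<longrightarrow> P s"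
  obtains ts where "0 \<le> ts" "ts \<le> 1" "\<not> P ts" "\<And>s. 0 \<le> s \<Longrightarrow> s < ts \<Longrightarrow> P s"
proof -
  define E where "E = {t\<in>{0..1}. \<not> P t}"
  have E1: "1 \<in> E" and bdd: "bdd_below E" using assms(1) by (auto simp: E_def intro: bdd_belowI[of _ 0])
  define ts where "ts = Inf E"
  have ts: "0 \<le> ts" "ts \<le> 1"
    using E1 bdd by (auto simp: ts_def E_def intro: cInf_greatest cInf_lower)
  have before: "P s" if "0 \<le> s" "s < ts" for s
    using that ts cInf_lower[OF _ bdd, of s] by (force simp: ts_def E_def)
  have "\<not> P ts"
  proof
    assume "P ts"
    with assms(1) ts have "ts < 1" by (cases "ts = 1") auto
    with \<open>P ts\<close> ts obtain \<eta> where "0 < \<eta>" and \<eta>: "\<forall>s. ts \<le> s \<and> s < ts + \<eta> \<longrightarrow> P s"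
      using right_open by blast
    have "min 1 (ts + \<eta>) \<le> e" if e: "e \<in> E" for e
    proof -
      have "ts \<le> e" "\<not> P e" using cInf_lower[OF e bdd] e by (auto simp: ts_def E_def)
      then have "ts + \<eta> \<le> e" using \<eta> by (meson not_less)
      then show ?thesis by simp
    qed
    then have "min 1 (ts + \<eta>) \<le> ts" unfolding ts_def using E1 by (intro cInf_greatest) auto
    with \<open>ts < 1\<close> \<open>0 < \<eta>\<close> show False by simp
  qed
  with ts before that show thesis by blast
qed

lemma nonempty_open_diff_Union_empty_interior:
  fixes U :: "'a::real_normed_vector set"
  assumes "finite \<F>" "open U" "U \<noteq> {}" "\<forall>C\<in>\<F>. closed C \<and> interior C = {}"
  shows "U - \<Union>\<F> \<noteq> {}"
  using assms
proof (induction \<F> arbitrary: U rule: finite_induct)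
  case (insert C \<F>)
  have "open (U - C)" using insert by (intro open_Diff) auto
  moreover have "U - C \<noteq> {}"
    using interior_maximal[of U C] insert.prems by auto
  ultimately have "(U - C) - \<Union>\<F> \<noteq> {}" using insert by auto
  then show ?case by auto
qed simp

text \<open>A segment \<open>[x, y)\<close> meets \<open>convex hull \<rho>\<close> only if \<open>x\<close> lies in the affine hull of \<open>insert y \<rho>\<close>,
  which has empty interior when \<open>card \<rho> < DIM('a)\<close>.\<close>

lemma exists_segment_avoiding_hulls:
  fixes y :: "'a::euclidean_space"
  assumes R: "finite R" "\<And>\<rho>. \<rho> \<in> R \<Longrightarrow> finite \<rho> \<and> card \<rho> < DIM('a)" and U: "open U" "U \<noteq> {}"
  obtains x where "x \<in> U" "\<And>t. 0 \<le> t \<Longrightarrow> t < 1 \<Longrightarrow> x + t *\<^sub>R (y - x) \<notin> (\<Union>\<rho>\<in>R. convex hull \<rho>)"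
proof -
  define G where "G = (\<lambda>\<rho>. affine hull (insert y \<rho>)) ` R"
  have G: "\<forall>C\<in>G. closed C \<and> interior C = {}"
  proof
    fix C assume "C \<in> G"
    then obtain \<rho> where \<rho>: "\<rho> \<in> R" "C = affine hull (insert y \<rho>)" by (auto simp: G_def)
    have "card (insert y \<rho>) \<le> Suc (card \<rho>)" using R(2)[OF \<rho>(1)] by (simp add: card_insert_if)
    then show "closed C \<and> interior C = {}"
      using R(2)[OF \<rho>(1)] \<rho>(2) by (simp add: empty_interior_affine_hull)
  qed
  have "U - \<Union>G \<noteq> {}"
    by (rule nonempty_open_diff_Union_empty_interior[OF _ U G]) (simp add: G_def R(1))
  then obtain x where x: "x \<in> U" "x \<notin> \<Union>G" by blast
  have "x + t *\<^sub>R (y - x) \<notin> convex hull \<rho>" if t: "0 \<le> t" "t < 1" and \<rho>: "\<rho> \<in> R" for t \<rho>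
  proof
    define z where "z = x + t *\<^sub>R (y - x)"
    assume "x + t *\<^sub>R (y - x) \<in> convex hull \<rho>"
    then have "z \<in> affine hull (insert y \<rho>)"
      using convex_hull_subset_affine_hull hull_mono[of \<rho> "insert y \<rho>"] by (auto simp: z_def)
    moreover have "y \<in> affine hull (insert y \<rho>)" by (simp add: hull_inc)
    ultimately have "(1 / (1 - t)) *\<^sub>R z + (- t / (1 - t)) *\<^sub>R y \<in> affine hull (insert y \<rho>)"
      using t by (intro mem_affine[OF affine_affine_hull]) (auto simp: field_simps)
    moreover have "(1 / (1 - t)) *\<^sub>R z + (- t / (1 - t)) *\<^sub>R y = x"
    proof -
      have c: "(1 - t) * (1 / (1 - t)) = 1" "(1 - t) * (- t / (1 - t)) = - t" using t by auto
      have "(1 - t) *\<^sub>R ((1 / (1 - t)) *\<^sub>R z + (- t / (1 - t)) *\<^sub>R y) = z - t *\<^sub>R y"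
        unfolding scaleR_add_right scaleR_scaleR c by simp
      also have "\<dots> = (1 - t) *\<^sub>R x" by (simp add: z_def algebra_simps)
      finally show ?thesis using t by simp
    qed
    ultimately show False using x(2) \<rho> by (auto simp: G_def)
  qed
  with x(1) that show thesis by blast
qed

lemma is_star_vertex_mem_top_simplex:
  fixes K :: "(real^'m) set set"
  assumes star: "is_star p K" and \<sigma>: "\<sigma> \<in> top_simplices K"
  shows "p \<in> \<sigma>"
proof -
  have complex: "simplicial_complex K" and "\<sigma> \<in> K" "card \<sigma> = CARD('m) + 1"
    using assms by (auto simp: is_star_def top_simplices_def)
  then obtain \<sigma>' where \<sigma>': "\<sigma>' \<in> K" "p \<in> \<sigma>'" "\<sigma> \<subseteq> \<sigma>'" using star by (auto simp: is_star_def)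
  then have "finite \<sigma>'" "\<not> affine_dependent \<sigma>'"
    using complex by (auto simp: simplicial_complex_def)
  then have "card \<sigma>' \<le> card \<sigma>"
    using aff_dim_affine_independent[of \<sigma>'] aff_dim_le_DIM[of \<sigma>'] \<open>card \<sigma> = _\<close> by simp
  then have "\<sigma> = \<sigma>'" using card_seteq \<open>finite \<sigma>'\<close> \<sigma>'(3) by blast
  then show ?thesis using \<sigma>'(2) by simp
qed

text \<open>Only the combinatorial part of fullness is used: \<open>{p}\<close> is not in the boundary complex, i.e. every
  facet through \<open>p\<close> lies in two \<open>m\<close>-simplices. \<open>A\<close> bounds all altitudes from below.\<close>

locale interior_vertex_star =
  fixes K :: "(real^'m) set set" and p :: "real^'m" and A :: real
  assumes complex: "simplicial_complex K"
    and vertex_mem_top: "\<And>\<sigma>. \<sigma> \<in> top_simplices K \<Longrightarrow> p \<in> \<sigma>"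
    and altitude_ge: "\<And>\<sigma>. \<sigma> \<in> top_simplices K \<Longrightarrow> A \<le> smallest_altitude \<sigma>"
    and A_pos: "0 < A"
    and vertex_not_boundary: "{p} \<notin> boundary_complex K"
begin

definition top_carrier :: "(real^'m) set" where
  "top_carrier = (\<Union>\<sigma>\<in>top_simplices K. convex hull \<sigma>)"

definition star_coord :: "real^'m \<Rightarrow> real" where
  "star_coord q = bary_coord (SOME \<sigma>. \<sigma> \<in> top_simplices K \<and> q \<in> convex hull \<sigma>) p q"

definition codim2_faces :: "(real^'m) set set" where
  "codim2_faces = {\<rho>. \<exists>\<sigma>\<in>top_simplices K. \<rho> \<subseteq> \<sigma> \<and> card \<rho> < CARD('m)}"

lemma top_simplexD:
  assumes "\<sigma> \<in> top_simplices K"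
  shows "\<sigma> \<in> K" "card \<sigma> = CARD('m) + 1" "finite \<sigma>" "spanning_simplex \<sigma>"
proof -
  show "\<sigma> \<in> K" and card: "card \<sigma> = CARD('m) + 1" using assms by (auto simp: top_simplices_def)
  then show "finite \<sigma>" "spanning_simplex \<sigma>"
    using complex spanning_simplexI by (auto simp: simplicial_complex_def)
qed

lemma finite_top_simplices: "finite (top_simplices K)"
  using complex by (auto simp: simplicial_complex_def top_simplices_def)

lemma convex_hull_inter_top:
  "\<sigma> \<in> top_simplices K \<Longrightarrow> \<tau> \<in> top_simplices K \<Longrightarrow> convex hull \<sigma> \<inter> convex hull \<tau> = convex hull (\<sigma> \<inter> \<tau>)"
  using complex top_simplexD(1) by (auto simp: simplicial_complex_def)

lemma bary_coord_lipschitz: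
  assumes "\<sigma> \<in> top_simplices K" "v \<in> \<sigma>"
  shows "A * \<bar>bary_coord \<sigma> v x - bary_coord \<sigma> v y\<bar> \<le> dist x y"
proof -
  have "A * \<bar>bary_coord \<sigma> v x - bary_coord \<sigma> v y\<bar>
      \<le> smallest_altitude \<sigma> * \<bar>bary_coord \<sigma> v x - bary_coord \<sigma> v y\<bar>"
    using altitude_ge[OF assms(1)] by (rule mult_right_mono) simp
  also have "\<dots> \<le> dist x y"
    by (rule smallest_altitude_mult_bary_coord_diff_le[OF top_simplexD(4)[OF assms(1)] assms(2)])
  finally show ?thesis .
qed

lemma bary_coord_pos_near:
  assumes "\<sigma> \<in> top_simplices K" "v \<in> \<sigma>" "\<mu> \<le> bary_coord \<sigma> v w" "dist q w < A * \<mu>"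
  shows "0 < bary_coord \<sigma> v q"
proof -
  have "A * \<bar>bary_coord \<sigma> v q - bary_coord \<sigma> v w\<bar> < A * \<mu>"
    using bary_coord_lipschitz[OF assms(1,2)] assms(4) by (meson le_less_trans)
  then show ?thesis using assms(3) A_pos by (simp add: mult_less_cancel_left_pos abs_less_iff)
qed

lemma star_coord_eq:
  assumes "\<sigma> \<in> top_simplices K" "q \<in> convex hull \<sigma>"
  shows "star_coord q = bary_coord \<sigma> p q"
proof -
  let ?\<tau> = "SOME \<sigma>. \<sigma> \<in> top_simplices K \<and> q \<in> convex hull \<sigma>"
  have "\<exists>\<sigma>. \<sigma> \<in> top_simplices K \<and> q \<in> convex hull \<sigma>" using assms by blast
  then have \<tau>: "?\<tau> \<in> top_simplices K \<and> q \<in> convex hull ?\<tau>" by (rule someI_ex)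
  then have "q \<in> convex hull (\<sigma> \<inter> ?\<tau>)" using convex_hull_inter_top[OF assms(1)] assms(2) by blast
  then have "bary_coord \<sigma> p q = bary_coord ?\<tau> p q"
    using \<tau> assms(1) vertex_mem_top
    by (intro bary_coord_common_face top_simplexD(4)) auto
  then show ?thesis by (simp add: star_coord_def)
qed

lemma closed_convex_hull_top: "\<sigma> \<in> top_simplices K \<Longrightarrow> closed (convex hull \<sigma>)"
  using top_simplexD(3) by (simp add: compact_imp_closed finite_imp_compact_convex_hull)

lemma closed_top_carrier: "closed top_carrier"
  unfolding top_carrier_def by (intro closed_UN finite_top_simplices ballI closed_convex_hull_top)

lemma boundary_point_star_coord:
  assumes "y \<in> carrier (boundary_complex K)"
  shows "y \<in> top_carrier" "star_coord y = 0"
proof -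
  obtain \<rho>' \<rho> where y: "y \<in> convex hull \<rho>'" and \<rho>'\<rho>: "\<rho>' \<subseteq> \<rho>" and "\<rho> \<in> K"
    and \<rho>: "card \<rho> = CARD('m)" "card {\<sigma>\<in>top_simplices K. \<rho> \<subseteq> \<sigma>} = 1"
    using assms by (auto simp: carrier_def boundary_complex_def)
  then obtain \<tau> where \<tau>: "\<tau> \<in> top_simplices K" "\<rho> \<subseteq> \<tau>"
    by (metis (no_types, lifting) card_1_singletonE insertI1 mem_Collect_eq)
  have "p \<notin> \<rho>"
    using vertex_not_boundary \<open>\<rho> \<in> K\<close> \<rho> by (auto simp: boundary_complex_def)
  moreover have "y \<in> convex hull \<rho>" using y hull_mono[OF \<rho>'\<rho>] by blast
  moreover have "y \<in> convex hull \<tau>" using calculation(2) hull_mono[OF \<tau>(2)] by blast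
  ultimately show "y \<in> top_carrier" "star_coord y = 0"
    using star_coord_eq[OF \<tau>(1)] bary_coord_eq_0_off_face[OF top_simplexD(4)[OF \<tau>(1)] \<tau>(2)]
      vertex_mem_top[OF \<tau>(1)] \<tau>(1) by (auto simp: top_carrier_def)
qed

lemma face_mem: "\<sigma> \<in> K \<Longrightarrow> \<tau> \<subseteq> \<sigma> \<Longrightarrow> \<tau> \<noteq> {} \<Longrightarrow> \<tau> \<in> K"
  using complex unfolding simplicial_complex_def by blast

lemma facet_through_vertex_shared:
  assumes "\<sigma> \<in> top_simplices K" "\<phi> \<subseteq> \<sigma>" "card \<phi> = CARD('m)" "p \<in> \<phi>"
  obtains \<sigma>' where "\<sigma>' \<in> top_simplices K" "\<phi> \<subseteq> \<sigma>'" "\<sigma>' \<noteq> \<sigma>"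
proof -
  have "\<phi> \<in> K" using face_mem[OF top_simplexD(1)[OF assms(1)] assms(2)] assms(4) by blast
  then have "card {\<sigma>'\<in>top_simplices K. \<phi> \<subseteq> \<sigma>'} \<noteq> 1"
    using vertex_not_boundary assms(3,4) unfolding boundary_complex_def by blast
  then have "{\<sigma>'\<in>top_simplices K. \<phi> \<subseteq> \<sigma>'} \<noteq> {\<sigma>}" by (metis is_singletonI is_singleton_altdef)
  then obtain \<sigma>' where "\<sigma>' \<in> top_simplices K" "\<phi> \<subseteq> \<sigma>'" "\<sigma>' \<noteq> \<sigma>" using assms(1,2) by blast
  then show thesis by (rule that)
qed

lemma adjacent_top_simplices:
  assumes "\<sigma> \<in> top_simplices K" "\<sigma>' \<in> top_simplices K" "\<sigma>' \<noteq> \<sigma>"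
    and "\<phi> \<subseteq> \<sigma>" "\<phi> \<subseteq> \<sigma>'" "card \<phi> = CARD('m)"
  obtains v0 v1 where "\<sigma> = insert v0 \<phi>" "\<sigma>' = insert v1 \<phi>" "v0 \<notin> \<sigma>'" "v1 \<notin> \<sigma>"
proof -
  have fin: "finite \<phi>" using assms(1,4) top_simplexD(3) finite_subset by blast
  have "card (\<sigma> - \<phi>) = 1" "card (\<sigma>' - \<phi>) = 1"
    using assms top_simplexD(2) by (simp_all add: card_Diff_subset[OF fin])
  then obtain v0 v1 where v: "\<sigma> - \<phi> = {v0}" "\<sigma>' - \<phi> = {v1}" by (meson card_1_singletonE)
  then have \<sigma>: "\<sigma> = insert v0 \<phi>" "\<sigma>' = insert v1 \<phi>" using assms(4,5) by auto
  have "\<not> \<sigma> \<subseteq> \<sigma>'" "\<not> \<sigma>' \<subseteq> \<sigma>"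
    using card_seteq[OF top_simplexD(3)[OF assms(2)], of \<sigma>] card_seteq[OF top_simplexD(3)[OF assms(1)], of \<sigma>']
      top_simplexD(2)[OF assms(1)] top_simplexD(2)[OF assms(2)] assms(3) by auto
  then have "v0 \<notin> \<sigma>'" "v1 \<notin> \<sigma>" using \<sigma> assms(4,5) by auto
  with \<sigma> that show thesis by blast
qed

text \<open>The coordinate of the vertex opposite \<open>\<phi>\<close> in \<open>\<sigma>'\<close> is an affine function vanishing on
  \<open>\<phi>\<close>, hence a multiple of the corresponding coordinate in \<open>\<sigma>\<close>.\<close>

lemma bary_coord_opposite_vertex:
  assumes "\<sigma> \<in> top_simplices K" "\<sigma>' \<in> top_simplices K"
    and "\<sigma> = insert v0 \<phi>" "\<sigma>' = insert v1 \<phi>" "v0 \<notin> \<sigma>'" "v1 \<notin> \<sigma>"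
  shows "bary_coord \<sigma>' v1 q = bary_coord \<sigma>' v1 v0 * bary_coord \<sigma> v0 q"
proof -
  note \<sigma> = top_simplexD[OF assms(1)] and \<sigma>' = top_simplexD[OF assms(2)]
  have "v0 \<notin> \<phi>" "finite \<phi>" using assms(3-5) \<sigma>(3) by auto
  have "bary_coord \<sigma>' v1 q = bary_coord \<sigma>' v1 (\<Sum>u\<in>\<sigma>. bary_coord \<sigma> u q *\<^sub>R id u)"
    using bary_coord_combination[OF \<sigma>(4)] by simp
  also have "\<dots> = (\<Sum>u\<in>\<sigma>. bary_coord \<sigma> u q * bary_coord \<sigma>' v1 (id u))"
    by (rule bary_coord_affine_sum[OF \<sigma>'(4) _ \<sigma>(3) bary_coord_sum_eq_1[OF \<sigma>(4)]]) (simp add: assms(4))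
  also have "\<dots> = bary_coord \<sigma> v0 q * bary_coord \<sigma>' v1 v0"
    using \<open>v0 \<notin> \<phi>\<close> \<open>finite \<phi>\<close> assms(3,4,6) bary_coord_vertex[OF \<sigma>'(4)] by (auto intro!: sum.neutral)
  finally show ?thesis by simp
qed

text \<open>Adjacent simplices lie on opposite sides of their common facet: otherwise a point
  slightly off the barycentre of the facet towards \<open>v0\<close> would lie in both simplices.\<close>

lemma opposite_vertex_bary_coord_neg:
  assumes \<sigma>T: "\<sigma> \<in> top_simplices K" and \<sigma>'T: "\<sigma>' \<in> top_simplices K"
    and \<sigma>: "\<sigma> = insert v0 \<phi>" "\<sigma>' = insert v1 \<phi>" "v0 \<notin> \<sigma>'" "v1 \<notin> \<sigma>" and card: "card \<phi> = CARD('m)"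
  shows "bary_coord \<sigma>' v1 v0 < 0"
proof (rule ccontr)
  assume "\<not> bary_coord \<sigma>' v1 v0 < 0"
  note sp = top_simplexD(4)[OF \<sigma>T] top_simplexD(4)[OF \<sigma>'T]
  define m where "m = real CARD('m)"
  define b where "b = (\<Sum>u\<in>\<phi>. (1 / card \<phi>) *\<^sub>R u)"
  have "\<phi> \<noteq> {}" using card by auto
  have b: "bary_coord \<tau> u b = (if u \<in> \<phi> then 1 / m else 0)" if "\<tau> \<in> {\<sigma>, \<sigma>'}" "u \<in> \<tau>" for \<tau> u
  proof -
    have "spanning_simplex \<tau>" "\<phi> \<subseteq> \<tau>" using that sp \<sigma>(1,2) by auto
    from bary_coord_barycentre[OF this \<open>\<phi> \<noteq> {}\<close> that(2)] show ?thesis by (simp add: b_def m_def card)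
  qed
  have "0 < m" by (simp add: m_def)
  then obtain s where s: "0 < s" "s \<le> 1" "s * dist b v0 < A * (1 / m)"
    using exists_step_mult_less[of "dist b v0" "A * (1 / m)"] A_pos by auto
  define q where "q = (1 - s) *\<^sub>R b + s *\<^sub>R v0"
  have "dist q b = s * dist b v0"
    using s(1) by (simp add: q_def dist_norm algebra_simps norm_minus_commute flip: scaleR_diff_right)
  with s(3) have near: "dist q b < A * (1 / m)" by simp
  have coord_q: "bary_coord \<tau> u q = (1 - s) * bary_coord \<tau> u b + s * bary_coord \<tau> u v0"
    if "\<tau> \<in> {\<sigma>, \<sigma>'}" "u \<in> \<tau>" for \<tau> u
    using bary_coord_affine_comb[of \<tau> u "1 - s" s b v0] that sp by (auto simp: q_def)
  have "q \<in> convex hull \<sigma>"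
    unfolding mem_convex_hull_iff_bary_coord_nonneg[OF sp(1)]
    using coord_q b bary_coord_vertex[OF sp(1)] s \<sigma>(1) \<open>0 < m\<close> by auto
  moreover have "q \<in> convex hull \<sigma>'"
    unfolding mem_convex_hull_iff_bary_coord_nonneg[OF sp(2)]
  proof
    fix u assume u: "u \<in> \<sigma>'"
    show "0 \<le> bary_coord \<sigma>' u q"
    proof (cases "u = v1")
      case True
      then show ?thesis using coord_q[of \<sigma>' u] b[of \<sigma>' u] u \<sigma> s \<open>\<not> _ < 0\<close> by auto
    next
      case False
      then have "u \<in> \<phi>" using u \<sigma>(2) by auto
      then show ?thesis using bary_coord_pos_near[OF \<sigma>'T u _ near] b[of \<sigma>' u] u by auto
    qed
  qed
  moreover have "\<sigma> \<inter> \<sigma>' = \<phi>" using \<sigma> by auto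
  ultimately have "q \<in> convex hull \<phi>" using convex_hull_inter_top[OF \<sigma>T \<sigma>'T] by blast
  then have "bary_coord \<sigma> v0 q = 0" using \<sigma> by (intro bary_coord_eq_0_off_face[OF sp(1)]) auto
  moreover have "bary_coord \<sigma> v0 q = s"
    using coord_q[of \<sigma> v0] b[of \<sigma> v0] bary_coord_vertex[OF sp(1)] \<sigma> by auto
  ultimately show False using s(1) by simp
qed

lemma near_facet_in_adjacent_hull:
  assumes \<sigma>T: "\<sigma> \<in> top_simplices K" and \<sigma>'T: "\<sigma>' \<in> top_simplices K" and "\<sigma>' \<noteq> \<sigma>"
    and \<phi>: "\<phi> \<subseteq> \<sigma>" "\<phi> \<subseteq> \<sigma>'" "card \<phi> = CARD('m)"
    and w: "w \<in> convex hull \<phi>" "\<And>u. u \<in> \<phi> \<Longrightarrow> \<mu> \<le> bary_coord \<sigma> u w" and q: "dist q w < A * \<mu>"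
  shows "\<exists>\<tau>\<in>{\<sigma>, \<sigma>'}. q \<in> convex hull \<tau> \<and> (\<forall>u\<in>\<phi>. 0 < bary_coord \<tau> u q)"
proof -
  obtain v0 v1 where \<sigma>: "\<sigma> = insert v0 \<phi>" "\<sigma>' = insert v1 \<phi>" "v0 \<notin> \<sigma>'" "v1 \<notin> \<sigma>"
    using adjacent_top_simplices[OF \<sigma>T \<sigma>'T \<open>\<sigma>' \<noteq> \<sigma>\<close> \<phi>] .
  note sp = top_simplexD(4)[OF \<sigma>T] top_simplexD(4)[OF \<sigma>'T]
  have "\<sigma> \<inter> \<sigma>' = \<phi>" using \<sigma> by auto
  then have same: "bary_coord \<sigma>' u w = bary_coord \<sigma> u w" if "u \<in> \<phi>" for u
    using bary_coord_common_face[OF sp, of w u] w(1) that by simp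
  have pos: "0 < bary_coord \<sigma> u q" "0 < bary_coord \<sigma>' u q" if u: "u \<in> \<phi>" for u
  proof -
    have "u \<in> \<sigma>" "u \<in> \<sigma>'" "\<mu> \<le> bary_coord \<sigma>' u w" using u \<phi> w(2)[OF u] same[OF u] by auto
    then show "0 < bary_coord \<sigma> u q" "0 < bary_coord \<sigma>' u q"
      using bary_coord_pos_near[OF \<sigma>T _ w(2)[OF u] q] bary_coord_pos_near[OF \<sigma>'T _ _ q] by blast+
  qed
  show ?thesis
  proof (cases "0 \<le> bary_coord \<sigma> v0 q")
    case True
    then have "q \<in> convex hull \<sigma>"
      unfolding mem_convex_hull_iff_bary_coord_nonneg[OF sp(1)] using pos \<sigma>(1) by (auto intro: less_imp_le)
    then show ?thesis using pos by auto
  next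
    case False
    then have "0 < bary_coord \<sigma>' v1 q"
      using bary_coord_opposite_vertex[OF \<sigma>T \<sigma>'T \<sigma>, of q] opposite_vertex_bary_coord_neg[OF \<sigma>T \<sigma>'T \<sigma> \<phi>(3)]
      by (simp add: mult_neg_neg)
    then have "q \<in> convex hull \<sigma>'"
      unfolding mem_convex_hull_iff_bary_coord_nonneg[OF sp(2)] using pos \<sigma>(2) by (auto intro: less_imp_le)
    then show ?thesis using pos by auto
  qed
qed

lemma star_coord_pos_nhd:
  assumes w: "w \<in> top_carrier" "w \<notin> (\<Union>\<rho>\<in>codim2_faces. convex hull \<rho>)" "0 < star_coord w"
  obtains r where "0 < r" "\<And>q. dist q w < r \<Longrightarrow> q \<in> top_carrier \<and> 0 < star_coord q"
proof -
  obtain \<sigma> where \<sigma>T: "\<sigma> \<in> top_simplices K" and w\<sigma>: "w \<in> convex hull \<sigma>" using w(1) by (auto simp: top_carrier_def)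
  note \<sigma> = top_simplexD[OF \<sigma>T]
  define \<phi> where "\<phi> = {v\<in>\<sigma>. 0 < bary_coord \<sigma> v w}"
  define \<mu> where "\<mu> = Min ((\<lambda>v. bary_coord \<sigma> v w) ` \<phi>)"
  have \<phi>\<sigma>: "\<phi> \<subseteq> \<sigma>" and "finite \<phi>" using \<sigma>(3) by (auto simp: \<phi>_def)
  have "p \<in> \<phi>" using w(3) star_coord_eq[OF \<sigma>T w\<sigma>] vertex_mem_top[OF \<sigma>T] by (simp add: \<phi>_def)
  then have img: "finite ((\<lambda>v. bary_coord \<sigma> v w) ` \<phi>)" "(\<lambda>v. bary_coord \<sigma> v w) ` \<phi> \<noteq> {}"
    using \<open>finite \<phi>\<close> by auto
  have \<mu>: "0 < \<mu>" "\<And>u. u \<in> \<phi> \<Longrightarrow> \<mu> \<le> bary_coord \<sigma> u w"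
    unfolding \<mu>_def Min_gr_iff[OF img] using img(1) by (auto simp: \<phi>_def)
  have "w \<in> convex hull \<phi>" unfolding \<phi>_def by (rule convex_hull_positive_support[OF \<sigma>(4) w\<sigma>])
  then have "\<not> card \<phi> < CARD('m)" using w(2) \<sigma>T \<phi>\<sigma> by (auto simp: codim2_faces_def)
  moreover have "card \<phi> \<le> CARD('m) + 1" using card_mono[OF \<sigma>(3) \<phi>\<sigma>] \<sigma>(2) by simp
  ultimately consider "card \<phi> = card \<sigma>" | "card \<phi> = CARD('m)" using \<sigma>(2) by linarith
  then have "\<exists>\<tau>\<in>top_simplices K. q \<in> convex hull \<tau> \<and> 0 < bary_coord \<tau> p q" if "dist q w < A * \<mu>" for q
  proof cases
    case 1
    then have "\<phi> = \<sigma>" using card_seteq[OF \<sigma>(3) \<phi>\<sigma>] by simp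
    then have "\<forall>u\<in>\<sigma>. 0 < bary_coord \<sigma> u q" using bary_coord_pos_near[OF \<sigma>T _ \<mu>(2) that] by blast
    moreover from this have "q \<in> convex hull \<sigma>"
      unfolding mem_convex_hull_iff_bary_coord_nonneg[OF \<sigma>(4)] by (auto intro: less_imp_le)
    ultimately show ?thesis using \<sigma>T \<open>p \<in> \<phi>\<close> \<phi>\<sigma> by blast
  next
    case 2
    obtain \<sigma>' where "\<sigma>' \<in> top_simplices K" "\<phi> \<subseteq> \<sigma>'" "\<sigma>' \<noteq> \<sigma>"
      using facet_through_vertex_shared[OF \<sigma>T \<phi>\<sigma> 2 \<open>p \<in> \<phi>\<close>] .
    with near_facet_in_adjacent_hull[OF \<sigma>T _ _ \<phi>\<sigma> _ 2 \<open>w \<in> convex hull \<phi>\<close> \<mu>(2) that] \<sigma>T \<open>p \<in> \<phi>\<close>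
    show ?thesis by blast
  qed
  then show thesis
    using A_pos \<mu>(1) star_coord_eq by (intro that[of "A * \<mu>"]) (fastforce simp: top_carrier_def)+
qed

lemma star_coord_lipschitz_on_segment:
  assumes "closed_segment u v \<subseteq> top_carrier"
  shows "A * \<bar>star_coord u - star_coord v\<bar> \<le> dist u v"
proof -
  define g where "g t = u + t *\<^sub>R (v - u)" for t
  define M where "M = dist u v / A"
  have dist_g: "dist (g s) (g t) = dist s t * dist u v" for s t
    by (simp add: g_def dist_norm dist_real_def norm_minus_commute flip: scaleR_diff_left)
  have "lipschitz_on M {0..1} (star_coord \<circ> g)"
  proof (rule lipschitz_on_closed_Union[where I = "top_simplices K" and U = "\<lambda>\<tau>. g -` (convex hull \<tau>)"])
    fix \<tau> assume \<tau>: "\<tau> \<in> top_simplices K"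
    show "lipschitz_on M (g -` (convex hull \<tau>)) (star_coord \<circ> g)"
    proof (rule lipschitz_onI)
      fix s t assume "s \<in> g -` (convex hull \<tau>)" "t \<in> g -` (convex hull \<tau>)"
      then have "A * dist ((star_coord \<circ> g) s) ((star_coord \<circ> g) t) \<le> dist (g s) (g t)"
        using bary_coord_lipschitz[OF \<tau> vertex_mem_top[OF \<tau>]] star_coord_eq[OF \<tau>]
        by (simp add: dist_real_def)
      then show "dist ((star_coord \<circ> g) s) ((star_coord \<circ> g) t) \<le> M * dist s t"
        using A_pos by (simp add: M_def dist_g field_simps)
    qed (use A_pos in \<open>simp add: M_def\<close>)
    show "closed (g -` (convex hull \<tau>))"
      using closed_convex_hull_top[OF \<tau>] unfolding g_def
      by (intro continuous_closed_vimage) (auto intro!: continuous_intros)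
  next
    have "g t \<in> top_carrier" if "t \<in> {0..1}" for t
      using that assms by (force simp: g_def in_segment algebra_simps)
    then show "{0..1} \<subseteq> (\<Union>\<tau>\<in>top_simplices K. g -` (convex hull \<tau>))" by (auto simp: top_carrier_def)
  qed (use finite_top_simplices A_pos in \<open>auto simp: M_def\<close>)
  then have "dist ((star_coord \<circ> g) 0) ((star_coord \<circ> g) 1) \<le> M * dist 0 (1::real)"
    by (rule lipschitz_onD) auto
  then show ?thesis using A_pos by (simp add: g_def M_def dist_real_def field_simps)
qed

text \<open>Follow the segment from \<open>x\<close> towards \<open>y\<close> up to the first point where the open star is left:
  there the coordinate of \<open>p\<close> has dropped to zero, at Lipschitz rate \<open>1/A\<close>.\<close>

lemma star_coord_mult_le_dist_generic:
  assumes x: "x \<in> top_carrier" and y: "y \<in> top_carrier" "star_coord y = 0"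
    and generic: "\<And>t. 0 \<le> t \<Longrightarrow> t < 1 \<Longrightarrow> x + t *\<^sub>R (y - x) \<notin> (\<Union>\<rho>\<in>codim2_faces. convex hull \<rho>)"
  shows "A * star_coord x \<le> dist x y"
proof -
  define g where "g t = x + t *\<^sub>R (y - x)" for t
  define P where "P t \<longleftrightarrow> g t \<in> top_carrier \<and> 0 < star_coord (g t)" for t
  have dist_g: "dist (g s) (g t) = \<bar>s - t\<bar> * dist x y" for s t
    by (simp add: g_def dist_norm norm_minus_commute flip: scaleR_diff_left)
  have right_open: "\<exists>\<eta>>0. \<forall>s. t \<le> s \<and> s < t + \<eta> \<longrightarrow> P s" if t: "0 \<le> t" "t < 1" "P t" for t
  proof -
    obtain r where r: "0 < r" "\<And>q. dist q (g t) < r \<Longrightarrow> q \<in> top_carrier \<and> 0 < star_coord q"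
      using star_coord_pos_nhd[of "g t"] t generic by (auto simp: P_def g_def)
    obtain \<eta> where \<eta>: "0 < \<eta>" "\<eta> * dist x y < r" using exists_step_mult_less[of "dist x y" r] r(1) by auto
    have "dist (g s) (g t) < r" if "t \<le> s" "s < t + \<eta>" for s
      using that \<eta>(2) mult_right_mono[of "s - t" \<eta> "dist x y"] by (simp add: dist_g)
    then show ?thesis using r(2) \<eta>(1) by (auto simp: P_def)
  qed
  show ?thesis
  proof (cases "P 0")
    case False
    then have "star_coord x \<le> 0" using x by (simp add: P_def g_def)
    then show ?thesis using A_pos by (simp add: mult_nonneg_nonpos order_trans[OF _ zero_le_dist])
  next
    case True
    have "\<not> P 1" using y by (simp add: P_def g_def)
    then obtain ts where ts: "0 \<le> ts" "ts \<le> 1" "\<not> P ts" "\<And>s. 0 \<le> s \<Longrightarrow> s < ts \<Longrightarrow> P s"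
      using first_failure_time right_open by blast
    have "0 < ts" using ts True by (cases "ts = 0") auto
    then have "closed_segment x (g ts) \<subseteq> top_carrier"
      using closed_segment_subset_closed[OF closed_top_carrier] ts(4) by (simp add: P_def g_def)
    then have "star_coord (g ts) \<le> 0" using ts(3) by (auto simp: P_def)
    have "A * (star_coord x - star_coord (g ts)) \<le> A * \<bar>star_coord x - star_coord (g ts)\<bar>"
      using A_pos by (intro mult_left_mono) auto
    also have "\<dots> \<le> dist x (g ts)" by (rule star_coord_lipschitz_on_segment) fact
    also have "\<dots> = ts * dist x y" using dist_g[of 0 ts] ts(1) by (simp add: g_def)
    also have "\<dots> \<le> dist x y" by (rule mult_left_le_one_le) (use ts in auto)
    moreover have "A * star_coord (g ts) \<le> 0"
      using \<open>star_coord (g ts) \<le> 0\<close> A_pos by (simp add: mult_nonneg_nonpos)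
    ultimately show ?thesis by (simp add: right_diff_distrib)
  qed
qed

lemma finite_codim2_faces: "finite codim2_faces"
  by (rule finite_subset[of _ "\<Union>(Pow ` top_simplices K)"])
    (auto simp: codim2_faces_def finite_top_simplices top_simplexD(3))

lemma codim2_faceD: "\<rho> \<in> codim2_faces \<Longrightarrow> finite \<rho> \<and> card \<rho> < CARD('m)"
  by (auto simp: codim2_faces_def dest: top_simplexD(3) finite_subset)

text \<open>Approximate \<open>x\<close> by interior points whose segment to \<open>y\<close> misses the faces of codimension two.\<close>

lemma star_coord_mult_le_dist:
  assumes x: "x \<in> top_carrier" and y: "y \<in> top_carrier" "star_coord y = 0"
  shows "A * star_coord x \<le> dist x y"
proof (rule field_le_epsilon)
  fix e :: real assume "0 < e"
  obtain \<sigma> where \<sigma>T: "\<sigma> \<in> top_simplices K" and x\<sigma>: "x \<in> convex hull \<sigma>" using x by (auto simp: top_carrier_def)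
  have "\<not> affine_dependent \<sigma>" "card \<sigma> = Suc DIM(real^'m)"
    using top_simplexD[OF \<sigma>T] by (auto simp: spanning_simplex_def)
  then have "interior (convex hull \<sigma>) \<noteq> {}" by (simp add: interior_convex_hull_eq_empty)
  then have "x \<in> closure (interior (convex hull \<sigma>))"
    using x\<sigma> closed_convex_hull_top[OF \<sigma>T] by (simp add: convex_closure_interior)
  then obtain x0 where "x0 \<in> interior (convex hull \<sigma>)" "dist x0 x < e / 2"
    using \<open>0 < e\<close> by (meson closure_approachable half_gt_zero)
  then have "ball x (e / 2) \<inter> interior (convex hull \<sigma>) \<noteq> {}" by (auto simp: dist_commute)
  moreover have "\<And>\<rho>. \<rho> \<in> codim2_faces \<Longrightarrow> finite \<rho> \<and> card \<rho> < DIM(real^'m)"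
    using codim2_faceD by simp
  ultimately obtain x' where x': "x' \<in> ball x (e / 2) \<inter> interior (convex hull \<sigma>)"
    and generic: "\<And>t. 0 \<le> t \<Longrightarrow> t < 1 \<Longrightarrow> x' + t *\<^sub>R (y - x') \<notin> (\<Union>\<rho>\<in>codim2_faces. convex hull \<rho>)"
    using exists_segment_avoiding_hulls[OF finite_codim2_faces _ open_Int[OF open_ball open_interior]]
    by blast
  then have x'\<sigma>: "x' \<in> convex hull \<sigma>" using interior_subset by blast
  have "A * star_coord x' \<le> dist x' y"
    using x'\<sigma> \<sigma>T y generic by (intro star_coord_mult_le_dist_generic) (auto simp: top_carrier_def)
  moreover have "A * \<bar>star_coord x - star_coord x'\<bar> \<le> dist x x'"
    using bary_coord_lipschitz[OF \<sigma>T vertex_mem_top[OF \<sigma>T]] star_coord_eq[OF \<sigma>T] x\<sigma> x'\<sigma> by simp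
  moreover have "A * star_coord x - A * star_coord x' \<le> A * \<bar>star_coord x - star_coord x'\<bar>"
    using A_pos by (simp flip: right_diff_distrib)
  moreover have "dist x' y \<le> dist x y + dist x x'" "dist x x' < e / 2"
    using x' dist_triangle[of x' y x] by (auto simp: dist_commute)
  ultimately show "A * star_coord x \<le> dist x y + e" by linarith
qed

lemma distortion_constant_bounds:
  assumes \<sigma>: "\<sigma> \<in> top_simplices K" "distortion_map \<xi> F (convex hull \<sigma>)"
    and "0 < s0" "s0 \<le> longest_edge \<sigma>" "longest_edge \<sigma> \<le> L0" "0 < t0" "t0 \<le> thickness \<sigma>"
    and "\<xi> < 1/6 * (real CARD('m) / (real CARD('m) + 1)) * (s0 / L0) * t0\<^sup>2"
  shows "0 \<le> \<xi>" "\<xi> \<le> 1"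
proof -
  have "1 < card \<sigma>" using top_simplexD(2)[OF \<sigma>(1)] by simp
  then obtain u v where "u \<in> \<sigma>" "v \<in> \<sigma>" "u \<noteq> v"
    using card_le_Suc0_iff_eq[OF top_simplexD(3)[OF \<sigma>(1)]] by (metis One_nat_def not_less)
  then show "0 \<le> \<xi>" "\<xi> \<le> 1"
    using distortion_map_nonneg[OF \<sigma>(2) hull_inc hull_inc] assms(3-)
      distortion_constant_le_one[OF top_simplexD(3,2)[OF \<sigma>(1)]] by blast+
qed

lemma distortion_map_displacement_le_on_top_carrier:
  assumes "z \<in> top_carrier" and F: "\<forall>\<sigma>\<in>top_simplices K. distortion_map \<xi> F (convex hull \<sigma>)"
    "\<forall>\<sigma>\<in>K. \<forall>v\<in>\<sigma>. F v = v"
    and \<xi>: "0 \<le> \<xi>" "\<xi> \<le> 1" and "0 < s0" "0 < t0"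
    and "\<forall>\<sigma>\<in>top_simplices K. s0 \<le> longest_edge \<sigma> \<and> longest_edge \<sigma> \<le> L0"
    and "\<forall>\<sigma>\<in>top_simplices K. thickness \<sigma> \<ge> t0"
  shows "norm (F z - z) \<le> 3 * \<xi> * L0 / t0"
proof -
  obtain \<tau> where \<tau>: "\<tau> \<in> top_simplices K" "z \<in> convex hull \<tau>" using assms(1) by (auto simp: top_carrier_def)
  show ?thesis
    using F top_simplexD(1)[OF \<tau>(1)] assms(6-) \<tau>(1)
    by (intro distortion_map_displacement_le_thickness[OF top_simplexD(4,2)[OF \<tau>(1)] _ _ \<tau>(2) \<xi> \<open>0 < t0\<close>])
      fastforce+
qed

lemma V_delta_star_coord:
  assumes "x \<in> V_delta p K \<delta>"
  shows "x \<in> top_carrier" "1 / (real CARD('m) + 1) - \<delta> < star_coord x"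
  using assms star_coord_eq by (auto simp: V_delta_def top_carrier_def)

end

lemma full_star_interior_vertex_star:
  fixes K :: "(real^'m) set set"
  assumes "full_star p K" "0 < s0" "0 < t0"
    and "\<forall>\<sigma>\<in>top_simplices K. s0 \<le> longest_edge \<sigma>" "\<forall>\<sigma>\<in>top_simplices K. thickness \<sigma> \<ge> t0"
  shows "interior_vertex_star K p (real CARD('m) * s0 * t0)"
proof
  show "simplicial_complex K" "{p} \<notin> boundary_complex K"
    using assms(1) by (auto simp: full_star_def is_star_def)
  show "\<And>\<sigma>. \<sigma> \<in> top_simplices K \<Longrightarrow> p \<in> \<sigma>"
    using assms(1) is_star_vertex_mem_top_simplex by (auto simp: full_star_def)
  show "0 < real CARD('m) * s0 * t0" using assms(2,3) by simp
  fix \<sigma> assume \<sigma>: "\<sigma> \<in> top_simplices K"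
  then have L: "s0 \<le> longest_edge \<sigma>" "0 < longest_edge \<sigma>" using assms(2,4) by fastforce+
  have "real CARD('m) * s0 * t0 \<le> real CARD('m) * longest_edge \<sigma> * t0"
    using L(1) assms(3) by (intro mult_right_mono mult_left_mono) auto
  also have "\<dots> \<le> smallest_altitude \<sigma>"
    using thickness_le_smallest_altitude[OF L(2)] assms(5) \<sigma> by blast
  finally show "real CARD('m) * s0 * t0 \<le> smallest_altitude \<sigma>" .
qed

theorem mainTheorem7:
  fixes p :: "real^'m" and K :: "(real^'m) set set" and F :: "real^'m \<Rightarrow> real^'m"
    and s0 L0 t0 \<xi> \<delta> :: real
  assumes full: "full_star p K"
    and s0_pos: "0 < s0" and t0_pos: "0 < t0"
    and lengths: "\<forall>\<sigma>\<in>top_simplices K. s0 \<le> longest_edge \<sigma> \<and> longest_edge \<sigma> \<le> L0"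
    and thick: "\<forall>\<sigma>\<in>top_simplices K. thickness \<sigma> \<ge> t0"
    and fixes_vertices: "\<forall>\<sigma>\<in>K. \<forall>v\<in>\<sigma>. F v = v"
    and distortion: "\<forall>\<sigma>\<in>top_simplices K. distortion_map \<xi> F (convex hull \<sigma>)"
    and xi_bound: "\<xi> < 1/6 * (real CARD('m) / (real CARD('m) + 1)) * (s0 / L0) * t0\<^sup>2"
    and delta_pos: "0 < \<delta>"
    and delta_bound: "\<delta> \<le> 1 / (real CARD('m) + 1) - 6 * L0 * \<xi> / (real CARD('m) * s0 * t0\<^sup>2)"
  shows "F ` V_delta p K \<delta> \<inter> F ` carrier (boundary_complex K) = {}"
proof -
  let ?A = "real CARD('m) * s0 * t0"
  interpret star: interior_vertex_star K p ?A
    using full_star_interior_vertex_star[OF full s0_pos t0_pos] lengths thick by blast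
  have False if x: "x \<in> V_delta p K \<delta>" and y: "y \<in> carrier (boundary_complex K)" and Fxy: "F x = F y"
    for x y
  proof -
    obtain \<sigma> where \<sigma>: "\<sigma> \<in> top_simplices K" using x by (auto simp: V_delta_def)
    then have \<xi>: "0 \<le> \<xi>" "\<xi> \<le> 1"
      using star.distortion_constant_bounds[OF \<sigma> distortion[rule_format, OF \<sigma>] s0_pos _ _ t0_pos _ xi_bound]
        lengths thick \<sigma> by auto
    note moves = star.distortion_map_displacement_le_on_top_carrier[OF _ distortion fixes_vertices \<xi> s0_pos t0_pos
        lengths thick]
    note x = star.V_delta_star_coord[OF x] and y = star.boundary_point_star_coord[OF y]
    have "?A * star.star_coord x \<le> dist x y" using star.star_coord_mult_le_dist[OF x(1) y] .
    also have "\<dots> \<le> norm (F x - x) + norm (F y - y)"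
      using Fxy norm_triangle_ineq4[of "F x - x" "F y - y"] by (simp add: dist_norm norm_minus_commute)
    also have "\<dots> \<le> 3 * \<xi> * L0 / t0 + 3 * \<xi> * L0 / t0"
      using moves[OF x(1)] moves[OF y(1)] by (rule add_mono)
    also have "\<dots> = ?A * (6 * L0 * \<xi> / (real CARD('m) * s0 * t0\<^sup>2))"
      using s0_pos t0_pos by (simp add: power2_eq_square field_simps)
    also have "\<dots> < ?A * star.star_coord x"
      using x(2) delta_bound star.A_pos by (intro mult_strict_left_mono) auto
    finally show False by simp
  qed
  then show ?thesis by blast
qed

end
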